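(* Let $n\geqslant 3$, let $D=\{x,y,e_2,\ldots,e_{n-1}\}$ and let $V$ be the set of monoid relations on $D$: (V1) $e_i^2=e_i$ for $2\leqslant i\leqslant n-1$; (V2) $xyx=x$ and $yxy=y$; (V3) $yx^2y=xy^2x$; (V4) $e_ie_j=e_je_i$ for $2\leqslant i<j\leqslant n-1$; (V5) $xye_i=e_ixy$ and $yxe_i=e_iyx$ for $2\leqslant i\leqslant n-1$; (V6) $xe_{i+1}=e_ix$ for $2\leqslant i\leqslant n-2$; (V7) $x^2y=e_{n-1}x$ and $yx^2=xe_2$; (V8) $yxe_2\cdots e_{n-1}xy=xe_2\cdots e_{n-1}xy$. Then $\langle D\mid V\rangle$ is a monoid presentation of $\mathcal{OCI}_n$ (with respect to the map sending each letter to the transformation of the same name). It has $n$ generators and $\frac12(n^2+3n)$ relations.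
   Context: Let $\Omega_n=\{1<\cdots<n\}$, $\mathcal{I}_n$ the symmetric inverse monoid on $\Omega_n$ (maps on the right, composed left to right). $g$ is the permutation $ig=i+1$ ($1\leqslant i\leqslant n-1$), $ng=1$; $\mathcal{C}_n=\{1,g,\ldots,g^{n-1}\}$; $\mathcal{CI}_n=\{\alpha\in\mathcal{I}_n\mid \alpha=\sigma|_{\mathrm{Dom}(\alpha)}\text{ for some }\sigma\in\mathcal{C}_n\}$; $\mathcal{OCI}_n$ is the submonoid of order-preserving elements of $\mathcal{CI}_n$. $e_i$ is the partial identity on $\Omega_n\setminus\{i\}$; $x$ has domain $\{1,\ldots,n-1\}$ with $ix=i+1$; $y=x^{-1}$ has domain $\{2,\ldots,n\}$ with $iy=i-1$. A presentation $\langle D\mid V\rangle$ defines $M$ via an injective map $D\to M$ whose image generates $M$ if the kernel of the induced homomorphism $D^*\to M$ is the smallest congruence on $D^*$ containing $V$. *)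

theory Defs
  imports Main
begin

type_synonym pmap = "nat \<Rightarrow> nat option"

text \<open>Product composed left to right: i (\<alpha>\<beta>) = (i\<alpha>)\<beta>.\<close>
definition pcomp :: "pmap \<Rightarrow> pmap \<Rightarrow> pmap" where
  "pcomp \<alpha> \<beta> = (\<lambda>i. case \<alpha> i of None \<Rightarrow> None | Some j \<Rightarrow> \<beta> j)"

definition pid :: "nat \<Rightarrow> pmap" where
  "pid n = (\<lambda>i. if 1 \<le> i \<and> i \<le> n then Some i else None)"

definition sym_inv :: "nat \<Rightarrow> pmap set" where
  "sym_inv n = {\<alpha>. dom \<alpha> \<subseteq> {1..n} \<and> ran \<alpha> \<subseteq> {1..n} \<and> inj_on \<alpha> (dom \<alpha>)}"

text \<open>The permutation g^k of \<Omega>_n, where i g = i+1 (i<n), n g = 1.\<close>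
definition gpow :: "nat \<Rightarrow> nat \<Rightarrow> nat \<Rightarrow> nat" where
  "gpow n k i = ((i - 1 + k) mod n) + 1"

definition CI :: "nat \<Rightarrow> pmap set" where
  "CI n = {\<alpha> \<in> sym_inv n. \<exists>k<n. \<forall>i\<in>dom \<alpha>. \<alpha> i = Some (gpow n k i)}"

definition order_preserving :: "pmap \<Rightarrow> bool" where
  "order_preserving \<alpha> \<longleftrightarrow> (\<forall>i\<in>dom \<alpha>. \<forall>j\<in>dom \<alpha>. i \<le> j \<longrightarrow> the (\<alpha> i) \<le> the (\<alpha> j))"

definition OCI :: "nat \<Rightarrow> pmap set" where
  "OCI n = {\<alpha> \<in> CI n. order_preserving \<alpha>}"

datatype gen = X | Y | E nat

definition gen_map :: "nat \<Rightarrow> gen \<Rightarrow> pmap" where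
  "gen_map n a = (case a of
      X \<Rightarrow> (\<lambda>i. if 1 \<le> i \<and> i \<le> n - 1 then Some (i + 1) else None)
    | Y \<Rightarrow> (\<lambda>i. if 2 \<le> i \<and> i \<le> n then Some (i - 1) else None)
    | E k \<Rightarrow> (\<lambda>i. if 1 \<le> i \<and> i \<le> n \<and> i \<noteq> k then Some i else None))"

definition word_eval :: "('m \<Rightarrow> 'm \<Rightarrow> 'm) \<Rightarrow> 'm \<Rightarrow> ('d \<Rightarrow> 'm) \<Rightarrow> 'd list \<Rightarrow> 'm" where
  "word_eval mult one f w = foldr (\<lambda>a r. mult (f a) r) w one"

inductive_set gen_cong :: "'d set \<Rightarrow> ('d list \<times> 'd list) set \<Rightarrow> ('d list \<times> 'd list) set"
  for D V where
  base: "(u, v) \<in> V \<Longrightarrow> (u, v) \<in> gen_cong D V"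
| refl: "u \<in> lists D \<Longrightarrow> (u, u) \<in> gen_cong D V"
| sym: "(u, v) \<in> gen_cong D V \<Longrightarrow> (v, u) \<in> gen_cong D V"
| trans: "(u, v) \<in> gen_cong D V \<Longrightarrow> (v, w) \<in> gen_cong D V \<Longrightarrow> (u, w) \<in> gen_cong D V"
| ctxt: "(u, v) \<in> gen_cong D V \<Longrightarrow> a \<in> lists D \<Longrightarrow> b \<in> lists D \<Longrightarrow>
         (a @ u @ b, a @ v @ b) \<in> gen_cong D V"

definition monoid_presentation ::
  "'d set \<Rightarrow> ('d list \<times> 'd list) set \<Rightarrow> ('d \<Rightarrow> 'm) \<Rightarrow> ('m \<Rightarrow> 'm \<Rightarrow> 'm) \<Rightarrow> 'm \<Rightarrow> 'm set \<Rightarrow> bool"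
where
  "monoid_presentation D V f mult one M \<longleftrightarrow>
     V \<subseteq> lists D \<times> lists D \<and>
     inj_on f D \<and> f ` D \<subseteq> M \<and>
     word_eval mult one f ` lists D = M \<and>
     (\<forall>u\<in>lists D. \<forall>v\<in>lists D.
        word_eval mult one f u = word_eval mult one f v \<longleftrightarrow> (u, v) \<in> gen_cong D V)"

definition Dgens :: "nat \<Rightarrow> gen set" where
  "Dgens n = {X, Y} \<union> E ` {2..n-1}"

definition Vrels :: "nat \<Rightarrow> (gen list \<times> gen list) set" where
  "Vrels n =
     {([E i, E i], [E i]) | i. 2 \<le> i \<and> i \<le> n - 1}
   \<union> {([X, Y, X], [X]), ([Y, X, Y], [Y])}
   \<union> {([Y, X, X, Y], [X, Y, Y, X])}
   \<union> {([E i, E j], [E j, E i]) | i j. 2 \<le> i \<and> i < j \<and> j \<le> n - 1}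
   \<union> {([X, Y, E i], [E i, X, Y]) | i. 2 \<le> i \<and> i \<le> n - 1}
   \<union> {([Y, X, E i], [E i, Y, X]) | i. 2 \<le> i \<and> i \<le> n - 1}
   \<union> {([X, E (i + 1)], [E i, X]) | i. 2 \<le> i \<and> i \<le> n - 2}
   \<union> {([X, X, Y], [E (n - 1), X]), ([Y, X, X], [X, E 2])}
   \<union> {([Y, X] @ map E [2..<n] @ [X, Y], [X] @ map E [2..<n] @ [X, Y])}"

end

theory Submission
  imports Defs
begin

text \<open>
  The elements of \<open>\<O>\<C>\<I>\<^sub>n\<close> are exactly the partial translations \<open>i \<mapsto> i + d\<close> of \<open>\<Omega>\<^sub>n\<close>.
  Writing \<open>e\<^sub>1 = yx\<close> and \<open>e\<^sub>n = xy\<close> for the partial identities missing \<open>1\<close> and \<open>n\<close>, the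
  relations make \<open>e\<^sub>1, \<dots>, e\<^sub>n\<close> commuting idempotents that move past \<open>x\<close> and \<open>y\<close> with
  shifted index, so every word equals \<open>e\<^sub>k\<^sub>1 \<cdots> e\<^sub>k\<^sub>m x\<^sup>d\<close> (where \<open>x\<^sup>d\<close> means \<open>y\<^sup>-\<^sup>d\<close>
  for \<open>d < 0\<close>), and only the set \<open>{k\<^sub>1, \<dots>, k\<^sub>m}\<close> matters. The idempotents whose index is
  moved out of \<open>\<Omega>\<^sub>n\<close> by \<open>x\<^sup>d\<close> are absorbed by it, and the product of all \<open>e\<^sub>i\<close> is a zero
  (this is where (V8) enters); hence this word depends only on the partial translation it
  represents, which gives completeness. Soundness is a check of each relation.
\<close>

lemma gen_cong_mono:
  assumes "D \<subseteq> D'" "(u, v) \<in> gen_cong D V"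
  shows "(u, v) \<in> gen_cong D' V"
  using assms(2) by induction (use assms(1) in \<open>auto intro: gen_cong.intros\<close>)

lemma gen_cong_in_lists:
  assumes "V \<subseteq> lists D \<times> lists D" "(u, v) \<in> gen_cong D V"
  shows "u \<in> lists D \<and> v \<in> lists D"
  using assms(2) by induction (use assms(1) in auto)

lemma gen_cong_restrict:
  assumes V: "V \<subseteq> lists D \<times> lists D" and uv: "(u, v) \<in> gen_cong UNIV V"
    and "u \<in> lists D \<or> v \<in> lists D"
  shows "(u, v) \<in> gen_cong D V"
  using uv assms(3)
proof (induction rule: gen_cong.induct)
  case (trans u v w)
  then show ?case using gen_cong_in_lists[OF V] by (meson gen_cong.trans)
qed (auto intro: gen_cong.intros)

lemma gen_cong_imp_eq:
  assumes "\<And>u v. h (u @ v) = m (h u) (h v)" "\<And>u v. (u, v) \<in> V \<Longrightarrow> h u = h v"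
    and "(u, v) \<in> gen_cong D V"
  shows "h u = h v"
  using assms(3) by induction (simp_all add: assms(1,2))

section \<open>Partial translations\<close>

definition ptransl :: "nat set \<Rightarrow> int \<Rightarrow> pmap" where
  "ptransl A d = (\<lambda>i. if i \<in> A then Some (nat (int i + d)) else None)"

lemma dom_ptransl [simp]: "dom (ptransl A d) = A"
  by (auto simp: ptransl_def split: if_splits)

lemma ptransl_eqI: "A = B \<Longrightarrow> (A \<noteq> {} \<Longrightarrow> d = e) \<Longrightarrow> ptransl A d = ptransl B e"
  by (cases "A = {}") (auto simp: ptransl_def)

lemma ptransl_eq_iff:
  assumes "\<And>i. i \<in> A \<Longrightarrow> 0 \<le> int i + d" "\<And>i. i \<in> B \<Longrightarrow> 0 \<le> int i + e"
  shows "ptransl A d = ptransl B e \<longleftrightarrow> A = B \<and> (A \<noteq> {} \<longrightarrow> d = e)"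
proof
  assume eq: "ptransl A d = ptransl B e"
  then have "A = B" by (metis dom_ptransl)
  moreover have "d = e" if "i \<in> A" for i
    using fun_cong[OF eq, of i] that assms[of i] \<open>A = B\<close> by (simp add: ptransl_def eq_nat_nat_iff)
  ultimately show "A = B \<and> (A \<noteq> {} \<longrightarrow> d = e)" by blast
qed (auto intro: ptransl_eqI)

lemma gpow_eq:
  assumes "1 \<le> i" "i \<le> n" "k < n"
  shows "gpow n k i = (if i + k \<le> n then i + k else i + k - n)"
proof (cases "i + k \<le> n")
  case False
  then have "(i - 1 + k) mod n = i - 1 + k - n"
    using assms by (simp add: le_mod_geq)
  then show ?thesis using False assms by (simp add: gpow_def)
qed (use assms in \<open>simp add: gpow_def\<close>)

lemma ptransl_in_OCI:
  assumes "0 < n" "A \<subseteq> {1..n}" and range: "\<And>i. i \<in> A \<Longrightarrow> 1 \<le> int i + d \<and> int i + d \<le> int n"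
  shows "ptransl A d \<in> OCI n"
proof -
  have "inj_on (ptransl A d) A"
  proof (rule inj_onI)
    fix i j assume "i \<in> A" "j \<in> A" "ptransl A d i = ptransl A d j"
    then show "i = j" using range[of i] range[of j] by (simp add: ptransl_def eq_nat_nat_iff)
  qed
  moreover have "ran (ptransl A d) \<subseteq> {1..n}"
  proof
    fix j assume "j \<in> ran (ptransl A d)"
    then obtain i where "i \<in> A" "j = nat (int i + d)"
      by (auto simp: ran_def ptransl_def split: if_splits)
    then show "j \<in> {1..n}" using range[of i] by auto
  qed
  ultimately have "ptransl A d \<in> sym_inv n"
    using assms(2) by (simp add: sym_inv_def)
  moreover have "\<exists>k<n. \<forall>i\<in>A. ptransl A d i = Some (gpow n k i)"
  proof -
    \<comment> \<open>a translation by \<open>d\<close> agrees on its domain with \<open>g\<^sup>k\<close>, \<open>k = d mod n\<close>\<close>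
    define k where "k = nat (d mod int n)"
    have "k < n" using assms(1) by (simp add: k_def nat_less_iff)
    moreover have "ptransl A d i = Some (gpow n k i)" if "i \<in> A" for i
    proof -
      have "int (i - 1 + k) mod int n = (int i - 1 + d) mod int n"
        using that assms(1,2) by (auto simp: k_def of_nat_diff mod_add_right_eq)
      then have "int (gpow n k i) = int i + d"
        using that assms(2) range[OF that] unfolding gpow_def zmod_int[symmetric]
        by (smt (verit) mod_pos_pos_trivial of_nat_1 of_nat_add)
      then show ?thesis using that by (simp add: ptransl_def)
    qed
    ultimately show ?thesis by blast
  qed
  moreover have "order_preserving (ptransl A d)"
    using range by (auto simp: order_preserving_def ptransl_def)
  ultimately show ?thesis by (simp add: OCI_def CI_def)
qed

lemma OCI_imp_ptransl:
  assumes "\<alpha> \<in> OCI n"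
  obtains A d where "A \<subseteq> {1..n}" "\<And>i. i \<in> A \<Longrightarrow> 1 \<le> int i + d \<and> int i + d \<le> int n"
    "\<alpha> = ptransl A d"
proof -
  define A where "A = dom \<alpha>"
  have A: "A \<subseteq> {1..n}" and op: "order_preserving \<alpha>"
    using assms by (auto simp: A_def OCI_def CI_def sym_inv_def)
  from assms obtain k where "k < n" and k: "\<And>i. i \<in> A \<Longrightarrow> \<alpha> i = Some (gpow n k i)"
    by (auto simp: A_def OCI_def CI_def)
  have \<alpha>: "\<alpha> i = Some (if i + k \<le> n then i + k else i + k - n)" if "i \<in> A" for i
    using k[OF that] gpow_eq[of i n k] \<open>k < n\<close> that A by auto
  \<comment> \<open>order preservation forbids wrapping around for some points of the domain but not others\<close>
  have no_wrap: "j + k \<le> n" if "i \<in> A" "j \<in> A" "i + k \<le> n" for i j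
  proof (rule ccontr)
    assume "\<not> j + k \<le> n"
    moreover have "1 \<le> i" "j \<le> n" using that A by auto
    ultimately have "i \<le> j" "the (\<alpha> i) > the (\<alpha> j)"
      using that \<alpha>[of i] \<alpha>[of j] by auto
    then show False using op that by (force simp: order_preserving_def A_def)
  qed
  define d where "d = (if \<exists>i\<in>A. i + k \<le> n then int k else int k - int n)"
  have "\<alpha> i = Some (nat (int i + d)) \<and> 1 \<le> int i + d \<and> int i + d \<le> int n" if "i \<in> A" for i
    using \<alpha>[OF that] no_wrap[OF _ that] that A \<open>k < n\<close> by (auto simp: d_def)
  then have "\<And>i. i \<in> A \<Longrightarrow> 1 \<le> int i + d \<and> int i + d \<le> int n" "\<alpha> = ptransl A d"
    by (auto simp: ptransl_def fun_eq_iff A_def)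
  with A show thesis by (rule that)
qed

lemma pcomp_assoc: "pcomp (pcomp \<alpha> \<beta>) \<gamma> = pcomp \<alpha> (pcomp \<beta> \<gamma>)"
  by (auto simp: pcomp_def fun_eq_iff split: option.split)

lemma pid_eq_ptransl: "pid n = ptransl {1..n} 0"
  by (auto simp: pid_def ptransl_def)

lemma pcomp_gen_map_ptransl:
  "pcomp (gen_map n X) (ptransl B e) = ptransl {i. 1 \<le> i \<and> i < n \<and> i + 1 \<in> B} (e + 1)"
  "pcomp (gen_map n Y) (ptransl B e) = ptransl {i. 2 \<le> i \<and> i \<le> n \<and> i - 1 \<in> B} (e - 1)"
  "pcomp (gen_map n (E k)) (ptransl B e) = ptransl {i \<in> B. 1 \<le> i \<and> i \<le> n \<and> i \<noteq> k} e"
  by (auto simp: pcomp_def ptransl_def gen_map_def fun_eq_iff of_nat_diff algebra_simps)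

lemma pcomp_ptransl_0: "pcomp (ptransl A 0) (ptransl B e) = ptransl (A \<inter> B) e"
  by (auto simp: pcomp_def ptransl_def fun_eq_iff)

section \<open>Consequences of the relations\<close>

lemma set_upt_Suc: "set [m..<Suc n] = {m..n}"
  by (simp only: set_upt atLeastLessThanSuc_atLeastAtMost)

lemma set_filter_upt: "set (filter P [m..<Suc n]) = {i \<in> {m..n}. P i}"
  by (simp only: set_filter set_upt_Suc)

definition xpow_int :: "int \<Rightarrow> gen list" where
  "xpow_int d = (if 0 \<le> d then replicate (nat d) X else replicate (nat (- d)) Y)"

lemma xpow_int_succ:
  "0 \<le> d \<Longrightarrow> [X] @ xpow_int d = xpow_int (d + 1)"
  "d < 0 \<Longrightarrow> xpow_int d = [Y] @ xpow_int (d + 1)"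
proof -
  show "0 \<le> d \<Longrightarrow> [X] @ xpow_int d = xpow_int (d + 1)"
    by (simp add: xpow_int_def nat_add_distrib)
  assume "d < 0"
  then have "nat (- d) = Suc (nat (- (d + 1)))" by simp
  then show "xpow_int d = [Y] @ xpow_int (d + 1)" using \<open>d < 0\<close> by (simp add: xpow_int_def)
qed

lemma xpow_int_pred:
  "d \<le> 0 \<Longrightarrow> [Y] @ xpow_int d = xpow_int (d - 1)"
  "0 < d \<Longrightarrow> xpow_int d = [X] @ xpow_int (d - 1)"
proof -
  assume "d \<le> 0"
  then have "nat (- (d - 1)) = Suc (nat (- d))" by simp
  then show "[Y] @ xpow_int d = xpow_int (d - 1)" using \<open>d \<le> 0\<close> by (simp add: xpow_int_def)
next
  assume "0 < d"
  then have "nat d = Suc (nat (d - 1))" by simp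
  then show "xpow_int d = [X] @ xpow_int (d - 1)" using \<open>0 < d\<close> by (simp add: xpow_int_def)
qed

locale OCI_presentation =
  fixes n :: nat
  assumes n_ge_3: "3 \<le> n"
begin

abbreviation eval :: "gen list \<Rightarrow> pmap" where
  "eval \<equiv> word_eval pcomp (pid n) (gen_map n)"

text \<open>
  Taking the congruence over all letters avoids membership side conditions;
  \<open>gen_cong_iff_eqv\<close> recovers the congruence over \<open>Dgens n\<close>.
\<close>

definition eqv :: "gen list \<Rightarrow> gen list \<Rightarrow> bool" (infix "\<approx>" 50) where
  "u \<approx> v \<longleftrightarrow> (u, v) \<in> gen_cong UNIV (Vrels n)"

lemma eqv_refl [simp]: "u \<approx> u"
  by (simp add: eqv_def gen_cong.refl)

lemma eqv_sym: "u \<approx> v \<Longrightarrow> v \<approx> u"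
  unfolding eqv_def by (rule gen_cong.sym)

lemma eqv_trans [trans]: "u \<approx> v \<Longrightarrow> v \<approx> w \<Longrightarrow> u \<approx> w"
  unfolding eqv_def by (rule gen_cong.trans)

lemma eqv_context: "u \<approx> v \<Longrightarrow> p @ u @ q \<approx> p @ v @ q"
  by (simp add: eqv_def gen_cong.ctxt)

lemma eqv_appendL: "u \<approx> v \<Longrightarrow> p @ u \<approx> p @ v"
  using eqv_context[of u v p "[]"] by simp

lemma eqv_appendR: "u \<approx> v \<Longrightarrow> u @ q \<approx> v @ q"
  using eqv_context[of u v "[]" q] by simp

lemma eqv_if_Vrels: "(u, v) \<in> Vrels n \<Longrightarrow> u \<approx> v"
  unfolding eqv_def by (rule gen_cong.base)

lemma Vrels_lists: "Vrels n \<subseteq> lists (Dgens n) \<times> lists (Dgens n)"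
  using n_ge_3 by (auto simp: Vrels_def Dgens_def)

lemma gen_cong_iff_eqv:
  "u \<in> lists (Dgens n) \<Longrightarrow> (u, v) \<in> gen_cong (Dgens n) (Vrels n) \<longleftrightarrow> u \<approx> v"
  unfolding eqv_def
proof
  show "(u, v) \<in> gen_cong (Dgens n) (Vrels n) \<Longrightarrow> (u, v) \<in> gen_cong UNIV (Vrels n)"
    by (rule gen_cong_mono[rotated]) simp_all
qed (use gen_cong_restrict[OF Vrels_lists] in blast)

lemma E_idem: "2 \<le> i \<Longrightarrow> i < n \<Longrightarrow> [E i, E i] \<approx> [E i]"
  by (rule eqv_if_Vrels) (simp add: Vrels_def)

lemma xyx: "[X, Y, X] \<approx> [X]"
  by (rule eqv_if_Vrels) (simp add: Vrels_def)

lemma yxy: "[Y, X, Y] \<approx> [Y]"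
  by (rule eqv_if_Vrels) (simp add: Vrels_def)

lemma yxxy: "[Y, X, X, Y] \<approx> [X, Y, Y, X]"
  by (rule eqv_if_Vrels) (simp add: Vrels_def)

lemma E_commute: "2 \<le> i \<Longrightarrow> i < j \<Longrightarrow> j < n \<Longrightarrow> [E i, E j] \<approx> [E j, E i]"
  by (rule eqv_if_Vrels) (simp add: Vrels_def)

lemma xy_E_commute: "2 \<le> i \<Longrightarrow> i < n \<Longrightarrow> [X, Y, E i] \<approx> [E i, X, Y]"
  by (rule eqv_if_Vrels) (simp add: Vrels_def)

lemma yx_E_commute: "2 \<le> i \<Longrightarrow> i < n \<Longrightarrow> [Y, X, E i] \<approx> [E i, Y, X]"
  by (rule eqv_if_Vrels) (simp add: Vrels_def)

lemma x_E_shift: "2 \<le> i \<Longrightarrow> i + 1 < n \<Longrightarrow> [X, E (i + 1)] \<approx> [E i, X]"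
  by (rule eqv_if_Vrels) (simp add: Vrels_def)

lemma xxy: "[X, X, Y] \<approx> [E (n - 1), X]"
  by (rule eqv_if_Vrels) (simp add: Vrels_def)

lemma yxx: "[Y, X, X] \<approx> [X, E 2]"
  by (rule eqv_if_Vrels) (simp add: Vrels_def)

lemma yx_Es_xy: "[Y, X] @ map E [2..<n] @ [X, Y] \<approx> [X] @ map E [2..<n] @ [X, Y]"
  by (rule eqv_if_Vrels) (simp add: Vrels_def)

text \<open>\<open>idem i\<close> is \<open>e\<^sub>i\<close>; \<open>e\<^sub>1\<close> and \<open>e\<^sub>n\<close> are not generators and are represented by \<open>yx\<close> and \<open>xy\<close>.\<close>

definition idem :: "nat \<Rightarrow> gen list" where
  "idem i = (if i = 1 then [Y, X] else if i = n then [X, Y] else [E i])"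

definition idems :: "nat list \<Rightarrow> gen list" where
  "idems ks = concat (map idem ks)"

lemma idems_simps [simp]:
  "idems [] = []" "idems (k # ks) = idem k @ idems ks" "idems (ks @ ls) = idems ks @ idems ls"
  by (simp_all add: idems_def)

lemma idem_idem: "1 \<le> i \<Longrightarrow> i \<le> n \<Longrightarrow> idem i @ idem i \<approx> idem i"
  using eqv_context[OF yxy, of "[]" "[X]"] eqv_context[OF xyx, of "[]" "[Y]"] E_idem[of i]
  by (auto simp: idem_def)

lemma idem_commute:
  assumes "1 \<le> i" "i \<le> n" "1 \<le> j" "j \<le> n"
  shows "idem i @ idem j \<approx> idem j @ idem i"
proof -
  have "idem i @ idem j \<approx> idem j @ idem i" if "1 \<le> i" "i < j" "j \<le> n" for i j
    using that n_ge_3 yxxy yx_E_commute[of j] eqv_sym[OF xy_E_commute[of i]] E_commute[of i j]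
    by (auto simp: idem_def)
  then show ?thesis
    using assms by (metis eqv_refl eqv_sym linorder_neqE_nat)
qed

lemma x_idem_1: "[X] @ idem 1 \<approx> [X]"
  using xyx by (simp add: idem_def)

lemma idem_n_x: "idem n @ [X] \<approx> [X]"
  using xyx n_ge_3 by (simp add: idem_def)

lemma y_idem_n: "[Y] @ idem n \<approx> [Y]"
  using yxy n_ge_3 by (simp add: idem_def)

lemma idem_1_y: "idem 1 @ [Y] \<approx> [Y]"
  using yxy by (simp add: idem_def)

lemma x_idem_Suc: "1 \<le> i \<Longrightarrow> i < n \<Longrightarrow> [X] @ idem (Suc i) \<approx> idem i @ [X]"
  using n_ge_3 eqv_sym[OF yxx] xxy x_E_shift[of i]
  by (cases "i = 1 \<or> i = n - 1") (auto simp: idem_def numeral_2_eq_2)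

lemma y_idem_Suc:
  assumes "1 \<le> i" "i < n"
  shows "[Y] @ idem i \<approx> idem (Suc i) @ [Y]"
proof -
  have "[Y] @ idem i \<approx> [Y] @ idem n @ idem i"
    using eqv_context[OF eqv_sym[OF y_idem_n], of "[]" "idem i"] by simp
  also have "\<dots> \<approx> [Y] @ idem i @ idem n"
    using eqv_context[OF idem_commute[of n i], of "[Y]" "[]"] assms by simp
  also have "\<dots> = [Y] @ (idem i @ [X]) @ [Y]"
    using n_ge_3 by (simp add: idem_def)
  also have "\<dots> \<approx> [Y] @ ([X] @ idem (Suc i)) @ [Y]"
    using eqv_context[OF eqv_sym[OF x_idem_Suc[of i]], of "[Y]" "[Y]"] assms by simp
  also have "\<dots> = idem 1 @ idem (Suc i) @ [Y]"
    by (simp add: idem_def)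
  also have "\<dots> \<approx> idem (Suc i) @ idem 1 @ [Y]"
    using eqv_context[OF idem_commute[of 1 "Suc i"], of "[]" "[Y]"] assms by simp
  also have "\<dots> \<approx> idem (Suc i) @ [Y]"
    using eqv_context[OF idem_1_y, of "idem (Suc i)" "[]"] by simp
  finally show ?thesis .
qed

lemma idem_idems_commute:
  "1 \<le> i \<Longrightarrow> i \<le> n \<Longrightarrow> set ks \<subseteq> {1..n} \<Longrightarrow> idem i @ idems ks \<approx> idems ks @ idem i"
proof (induction ks)
  case (Cons k ks)
  have "idem i @ idem k @ idems ks \<approx> idem k @ idem i @ idems ks"
    using eqv_context[OF idem_commute[of i k], of "[]" "idems ks"] Cons.prems by simp
  also have "\<dots> \<approx> idem k @ idems ks @ idem i"
    using eqv_context[OF Cons.IH, of "idem k" "[]"] Cons.prems by simp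
  finally show ?case by simp
qed simp

lemma idems_commute:
  "set ks \<subseteq> {1..n} \<Longrightarrow> set ls \<subseteq> {1..n} \<Longrightarrow> idems ks @ idems ls \<approx> idems ls @ idems ks"
proof (induction ks)
  case (Cons k ks)
  have "idem k @ idems ks @ idems ls \<approx> idem k @ idems ls @ idems ks"
    using eqv_context[OF Cons.IH, of "idem k" "[]"] Cons.prems by simp
  also have "\<dots> \<approx> idems ls @ idem k @ idems ks"
    using eqv_context[OF idem_idems_commute[of k ls], of "[]" "idems ks"] Cons.prems by simp
  finally show ?case by simp
qed simp

lemma idems_absorb:
  "i \<in> set ks \<Longrightarrow> set ks \<subseteq> {1..n} \<Longrightarrow> idems ks @ idem i \<approx> idems ks"
proof (induction ks)
  case (Cons k ks)
  show ?case
  proof (cases "i \<in> set ks")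
    case True
    then show ?thesis using eqv_context[OF Cons.IH, of "idem k" "[]"] Cons.prems by simp
  next
    case False
    then have "i = k" using Cons.prems by simp
    have "idem k @ idems ks @ idem k \<approx> idem k @ idem k @ idems ks"
      using eqv_context[OF eqv_sym[OF idem_idems_commute[of k ks]], of "idem k" "[]"] Cons.prems
      by simp
    also have "\<dots> \<approx> idem k @ idems ks"
      using eqv_context[OF idem_idem[of k], of "[]" "idems ks"] Cons.prems by simp
    finally show ?thesis using \<open>i = k\<close> by simp
  qed
qed simp

lemma idems_absorb_idems:
  "set ls \<subseteq> set ks \<Longrightarrow> set ks \<subseteq> {1..n} \<Longrightarrow> idems ks @ idems ls \<approx> idems ks"
proof (induction ls)
  case (Cons l ls)
  have "idems ks @ idem l @ idems ls \<approx> idems ks @ idems ls"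
    using eqv_context[OF idems_absorb[of l ks], of "[]" "idems ls"] Cons.prems by simp
  also have "\<dots> \<approx> idems ks"
    using Cons by simp
  finally show ?case by simp
qed simp

lemma idems_eqv_if_set_eq:
  assumes "set ks = set ls" "set ls \<subseteq> {1..n}"
  shows "idems ks \<approx> idems ls"
proof -
  have "idems ks \<approx> idems ks @ idems ls"
    using eqv_sym[OF idems_absorb_idems[of ls ks]] assms by simp
  also have "\<dots> \<approx> idems ls @ idems ks"
    using idems_commute[of ks ls] assms by simp
  also have "\<dots> \<approx> idems ls"
    using idems_absorb_idems[of ks ls] assms by simp
  finally show ?thesis .
qed

definition shift_down :: "nat list \<Rightarrow> nat list" where
  "shift_down ks = map (\<lambda>k. k - 1) (filter (\<lambda>k. k \<noteq> 1) ks)"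

definition shift_up :: "nat list \<Rightarrow> nat list" where
  "shift_up ks = map Suc (filter (\<lambda>k. k \<noteq> n) ks)"

lemma set_shift_subset:
  "set ks \<subseteq> {1..n} \<Longrightarrow> set (shift_down ks) \<subseteq> {1..n}"
  "set ks \<subseteq> {1..n} \<Longrightarrow> set (shift_up ks) \<subseteq> {1..n}"
  by (fastforce simp: shift_down_def shift_up_def)+

lemma x_idems: "set ks \<subseteq> {1..n} \<Longrightarrow> [X] @ idems ks \<approx> idems (shift_down ks) @ [X]"
proof (induction ks)
  case (Cons k ks)
  have "[X] @ idem k \<approx> idems (shift_down [k]) @ [X]"
  proof (cases "k = 1")
    case False
    then have "1 \<le> k - 1" "k - 1 < n" using Cons.prems by auto
    then show ?thesis using x_idem_Suc[of "k - 1"] False by (simp add: shift_down_def)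
  qed (use x_idem_1 in \<open>simp add: shift_down_def\<close>)
  then have "[X] @ idem k @ idems ks \<approx> idems (shift_down [k]) @ [X] @ idems ks"
    using eqv_appendR by fastforce
  also have "\<dots> \<approx> idems (shift_down [k]) @ idems (shift_down ks) @ [X]"
    using eqv_appendL[OF Cons.IH] Cons.prems by simp
  finally show ?case by (simp add: shift_down_def split: if_splits)
qed (simp add: shift_down_def)

lemma y_idems: "set ks \<subseteq> {1..n} \<Longrightarrow> [Y] @ idems ks \<approx> idems (shift_up ks) @ [Y]"
proof (induction ks)
  case (Cons k ks)
  have "[Y] @ idem k \<approx> idems (shift_up [k]) @ [Y]"
  proof (cases "k = n")
    case False
    then show ?thesis using y_idem_Suc[of k] Cons.prems by (simp add: shift_up_def)
  qed (use y_idem_n in \<open>simp add: shift_up_def\<close>)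
  then have "[Y] @ idem k @ idems ks \<approx> idems (shift_up [k]) @ [Y] @ idems ks"
    using eqv_appendR by fastforce
  also have "\<dots> \<approx> idems (shift_up [k]) @ idems (shift_up ks) @ [Y]"
    using eqv_appendL[OF Cons.IH] Cons.prems by simp
  finally show ?case by (simp add: shift_up_def split: if_splits)
qed (simp add: shift_up_def)

lemma xpow_idem:
  "1 \<le> i \<Longrightarrow> i + k \<le> n \<Longrightarrow> replicate k X @ idem (i + k) \<approx> idem i @ replicate k X"
proof (induction k arbitrary: i)
  case (Suc k)
  have "[X] @ replicate k X @ idem (Suc i + k) \<approx> [X] @ idem (Suc i) @ replicate k X"
    using eqv_appendL[OF Suc.IH[of "Suc i"], of "[X]"] Suc.prems by simp
  also have "\<dots> \<approx> idem i @ [X] @ replicate k X"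
    using eqv_appendR[OF x_idem_Suc[of i]] Suc.prems by simp
  finally show ?case by simp
qed simp

lemma ypow_idem:
  "1 \<le> i \<Longrightarrow> i + k \<le> n \<Longrightarrow> replicate k Y @ idem i \<approx> idem (i + k) @ replicate k Y"
proof (induction k)
  case (Suc k)
  have "[Y] @ replicate k Y @ idem i \<approx> [Y] @ idem (i + k) @ replicate k Y"
    using eqv_appendL[OF Suc.IH, of "[Y]"] Suc.prems by simp
  also have "\<dots> \<approx> idem (Suc (i + k)) @ [Y] @ replicate k Y"
    using eqv_appendR[OF y_idem_Suc[of "i + k"]] Suc.prems by simp
  finally show ?case by simp
qed simp

lemma idem_xpow_absorb:
  assumes "1 \<le> j" "j \<le> n" "n < j + k"
  shows "idem j @ replicate k X \<approx> replicate k X"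
proof -
  have split: "replicate k X = replicate (n - j) X @ [X] @ replicate (k - (n - j) - 1) X"
    using assms by (simp flip: replicate_add replicate_Suc)
  have "replicate (n - j) X @ [X] \<approx> replicate (n - j) X @ idem n @ [X]"
    using eqv_appendL[OF eqv_sym[OF idem_n_x]] by simp
  also have "\<dots> \<approx> idem j @ replicate (n - j) X @ [X]"
    using eqv_appendR[OF xpow_idem[of j "n - j"]] assms by simp
  finally show ?thesis
    using eqv_appendR[of _ _ "replicate (k - (n - j) - 1) X"] split by (metis append.assoc eqv_sym)
qed

lemma idem_ypow_absorb:
  assumes "1 \<le> j" "j \<le> n" "j \<le> k"
  shows "idem j @ replicate k Y \<approx> replicate k Y"
proof -
  have split: "replicate k Y = replicate (j - 1) Y @ [Y] @ replicate (k - j) Y"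
    using assms by (simp flip: replicate_add replicate_Suc)
  have "replicate (j - 1) Y @ [Y] \<approx> replicate (j - 1) Y @ idem 1 @ [Y]"
    using eqv_appendL[OF eqv_sym[OF idem_1_y]] by simp
  also have "\<dots> \<approx> idem j @ replicate (j - 1) Y @ [Y]"
    using eqv_appendR[OF ypow_idem[of 1 "j - 1"]] assms by simp
  finally show ?thesis
    using eqv_appendR[of _ _ "replicate (k - j) Y"] split by (metis append.assoc eqv_sym)
qed

definition transl_dom :: "int \<Rightarrow> nat set" where
  "transl_dom d = {i. 1 \<le> i \<and> i \<le> n \<and> 1 \<le> int i + d \<and> int i + d \<le> int n}"

lemma transl_dom_subset: "transl_dom d \<subseteq> {1..n}"
  by (auto simp: transl_dom_def)

lemma idem_xpow_int_absorb:
  "1 \<le> j \<Longrightarrow> j \<le> n \<Longrightarrow> j \<notin> transl_dom d \<Longrightarrow> idem j @ xpow_int d \<approx> xpow_int d"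
  using idem_xpow_absorb[of j "nat d"] idem_ypow_absorb[of j "nat (- d)"]
  by (auto simp: xpow_int_def transl_dom_def)

lemma idems_xpow_int_absorb:
  "(\<And>j. j \<in> set js \<Longrightarrow> 1 \<le> j \<and> j \<le> n \<and> j \<notin> transl_dom d) \<Longrightarrow>
   idems js @ xpow_int d \<approx> xpow_int d"
proof (induction js)
  case (Cons j js)
  have "idem j @ idems js @ xpow_int d \<approx> idem j @ xpow_int d"
    using eqv_appendL[OF Cons.IH] Cons.prems by simp
  also have "\<dots> \<approx> xpow_int d"
    using idem_xpow_int_absorb[of j d] Cons.prems by simp
  finally show ?case by simp
qed simp

lemma idems_eq_map_E: "set ks \<subseteq> {2..<n} \<Longrightarrow> idems ks = map E ks"
  by (induction ks) (auto simp: idem_def)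

definition zero_word :: "gen list" where
  "zero_word = idems [1..<Suc n]"

lemma zero_word_x: "zero_word @ [X] \<approx> zero_word"
proof -
  have Es: "idems [2..<n] = map E [2..<n]" by (simp add: idems_eq_map_E)
  have split_ends: "[1..<Suc n] = 1 # [2..<n] @ [n]"
    using n_ge_3 upt_conv_Cons[of 1 "Suc n"] upt_Suc_append[of 2 n] by (simp add: numeral_2_eq_2)
  have split_last: "[1..<Suc n] = [1..<n - 1] @ [n - 1, n]"
    using n_ge_3 upt_Suc_append[of 1 n] upt_Suc_append[of 1 "n - 1"] by (simp add: numeral_2_eq_2)
  have "[2..<n] = map Suc [1..<n - 1]"
    using n_ge_3 by (simp add: map_Suc_upt numeral_2_eq_2)
  then have shifted: "shift_down [2..<n] = [1..<n - 1]"
    by (simp add: shift_down_def filter_id_conv comp_def)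
  have "zero_word = [Y, X] @ map E [2..<n] @ [X, Y]"
    using split_ends Es n_ge_3 by (simp add: zero_word_def idem_def)
  also have "\<dots> \<approx> [X] @ idems [2..<n] @ [X, Y]"
    using yx_Es_xy Es by simp
  also have "\<dots> \<approx> idems [1..<n - 1] @ [X] @ [X, Y]"
    using eqv_appendR[OF x_idems[of "[2..<n]"], of "[X, Y]"] shifted by force
  also have "\<dots> \<approx> idems [1..<n - 1] @ [E (n - 1), X]"
    using eqv_appendL[OF xxy] by simp
  also have "\<dots> \<approx> idems [1..<n - 1] @ [E (n - 1)] @ idem n @ [X]"
    using eqv_appendL[OF eqv_sym[OF idem_n_x], of "idems [1..<n - 1] @ [E (n - 1)]"] by simp
  also have "\<dots> = zero_word @ [X]"
    using split_last n_ge_3 by (auto simp: zero_word_def idem_def)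
  finally show ?thesis by (rule eqv_sym)
qed

lemma zero_word_y: "zero_word @ [Y] \<approx> zero_word"
proof -
  have "zero_word @ [Y] \<approx> zero_word @ [X] @ [Y]"
    using eqv_appendR[OF eqv_sym[OF zero_word_x], of "[Y]"] by simp
  also have "\<dots> = idems ([1..<Suc n] @ [n])"
    using n_ge_3 by (simp add: zero_word_def idem_def)
  also have "\<dots> \<approx> zero_word"
    unfolding zero_word_def by (rule idems_eqv_if_set_eq) (use n_ge_3 in auto)
  finally show ?thesis .
qed

lemma zero_word_replicate:
  assumes "g = X \<or> g = Y"
  shows "zero_word @ replicate k g \<approx> zero_word"
proof (induction k)
  case (Suc k)
  have "zero_word @ [g] @ replicate k g \<approx> zero_word @ replicate k g"
    using eqv_appendR[of "zero_word @ [g]"] zero_word_x zero_word_y assms by auto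
  then show ?case using Suc eqv_trans by simp
qed simp

lemma zero_word_xpow_int: "zero_word @ xpow_int d \<approx> zero_word"
  using zero_word_replicate by (simp add: xpow_int_def)

section \<open>Normal forms\<close>

definition normal_word :: "nat list \<Rightarrow> int \<Rightarrow> gen list" where
  "normal_word ks d = idems ks @ xpow_int d"

lemma x_normal_word:
  assumes "set ks \<subseteq> {1..n}"
  shows "X # normal_word ks d \<approx> normal_word (shift_down ks @ (if 0 \<le> d then [] else [n])) (d + 1)"
proof -
  have shift: "[X] @ idems ks @ q \<approx> idems (shift_down ks) @ [X] @ q" for q
    using eqv_appendR[OF x_idems[OF assms]] by simp
  show ?thesis
  proof (cases "0 \<le> d")
    case True
    then show ?thesis
      using shift[of "xpow_int d"] xpow_int_succ(1)[of d] by (simp add: normal_word_def)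
  next
    case False
    then show ?thesis
      using shift[of "[Y] @ xpow_int (d + 1)"] xpow_int_succ(2)[of d] n_ge_3
      by (simp add: normal_word_def idem_def)
  qed
qed

lemma y_normal_word:
  assumes "set ks \<subseteq> {1..n}"
  shows "Y # normal_word ks d \<approx> normal_word (shift_up ks @ (if d \<le> 0 then [] else [1])) (d - 1)"
proof -
  have shift: "[Y] @ idems ks @ q \<approx> idems (shift_up ks) @ [Y] @ q" for q
    using eqv_appendR[OF y_idems[OF assms]] by simp
  show ?thesis
  proof (cases "d \<le> 0")
    case True
    then show ?thesis
      using shift[of "xpow_int d"] xpow_int_pred(1)[of d] by (simp add: normal_word_def)
  next
    case False
    then show ?thesis
      using shift[of "[X] @ xpow_int (d - 1)"] xpow_int_pred(2)[of d]
      by (simp add: normal_word_def idem_def)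
  qed
qed

lemma normal_word_Cons:
  assumes "a \<in> Dgens n" "set ks \<subseteq> {1..n}"
  obtains ls e where "set ls \<subseteq> {1..n}" "a # normal_word ks d \<approx> normal_word ls e"
proof (cases a)
  case (E i)
  then have "a # normal_word ks d = normal_word (i # ks) d" "1 \<le> i" "i \<le> n"
    using assms(1) n_ge_3 by (auto simp: Dgens_def idem_def normal_word_def)
  then show thesis
    using that[of "i # ks" d] assms(2) by simp
next
  case X
  then show thesis
    using that[of "shift_down ks @ (if 0 \<le> d then [] else [n])" "d + 1"]
      x_normal_word[OF assms(2), of d] set_shift_subset(1)[OF assms(2)] n_ge_3 by simp
next
  case Y
  then show thesis
    using that[of "shift_up ks @ (if d \<le> 0 then [] else [1])" "d - 1"]
      y_normal_word[OF assms(2), of d] set_shift_subset(2)[OF assms(2)] n_ge_3 by simp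
qed

lemma normal_form:
  assumes "w \<in> lists (Dgens n)"
  obtains ks d where "set ks \<subseteq> {1..n}" "w \<approx> normal_word ks d"
proof -
  have "\<exists>ks d. set ks \<subseteq> {1..n} \<and> w \<approx> normal_word ks d"
    using assms
  proof (induction w)
    case Nil
    have "normal_word [] 0 = []" by (simp add: normal_word_def xpow_int_def)
    then show ?case by (metis empty_subsetI eqv_refl list.set(1))
  next
    case (Cons a w)
    then obtain ks d where ks: "set ks \<subseteq> {1..n}" "w \<approx> normal_word ks d" by auto
    obtain ls e where "set ls \<subseteq> {1..n}" "a # normal_word ks d \<approx> normal_word ls e"
      using \<open>a \<in> Dgens n\<close> ks(1) by (rule normal_word_Cons)
    then have "a # w \<approx> normal_word ls e"
      using eqv_appendL[OF ks(2), of "[a]"] by (simp add: eqv_trans)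
    with \<open>set ls \<subseteq> {1..n}\<close> show ?case by blast
  qed
  then show thesis using that by blast
qed

definition canonical_word :: "nat set \<Rightarrow> int \<Rightarrow> gen list" where
  "canonical_word A d =
     (if A = {} then zero_word else normal_word (filter (\<lambda>i. i \<notin> A) [1..<Suc n]) d)"

lemma normal_word_absorb:
  "normal_word ks d \<approx> normal_word (ks @ filter (\<lambda>j. j \<notin> transl_dom d) [1..<Suc n]) d"
proof -
  have "idems (filter (\<lambda>j. j \<notin> transl_dom d) [1..<Suc n]) @ xpow_int d \<approx> xpow_int d"
    by (rule idems_xpow_int_absorb) (simp add: set_filter_upt del: upt_Suc)
  then show ?thesis
    unfolding normal_word_def by (simp add: eqv_appendL eqv_sym del: upt_Suc)
qed

lemma normal_word_eqv_canonical_word: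
  assumes "set ks \<subseteq> {1..n}"
  shows "normal_word ks d \<approx> canonical_word ({1..n} - set ks) d"
proof (cases "{1..n} - set ks = {}")
  case True
  then have "idems ks \<approx> zero_word"
    unfolding zero_word_def using assms by (intro idems_eqv_if_set_eq) (auto simp only: set_upt_Suc)
  then have "normal_word ks d \<approx> zero_word @ xpow_int d"
    unfolding normal_word_def by (rule eqv_appendR)
  then show ?thesis
    using zero_word_xpow_int True by (simp add: canonical_word_def eqv_trans)
next
  case False
  have "idems ks \<approx> idems (filter (\<lambda>i. i \<notin> {1..n} - set ks) [1..<Suc n])"
    using assms by (intro idems_eqv_if_set_eq) (auto simp only: set_filter_upt)
  then show ?thesis
    using False unfolding canonical_word_def normal_word_def by (simp add: eqv_appendR del: upt_Suc)
qed

lemma canonical_form: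
  assumes "w \<in> lists (Dgens n)"
  obtains A d where "A \<subseteq> transl_dom d" "w \<approx> canonical_word A d"
proof -
  obtain ks d where ks: "set ks \<subseteq> {1..n}" "w \<approx> normal_word ks d"
    using normal_form[OF assms] .
  define ls where "ls = ks @ filter (\<lambda>j. j \<notin> transl_dom d) [1..<Suc n]"
  have "set ls \<subseteq> {1..n}" "{1..n} - set ls \<subseteq> transl_dom d"
    using ks(1) by (auto simp: ls_def set_filter_upt simp del: upt_Suc)
  moreover have "w \<approx> canonical_word ({1..n} - set ls) d"
    using ks(2) normal_word_absorb[of ks d] normal_word_eqv_canonical_word[of ls d]
    by (metis calculation(1) eqv_trans ls_def)
  ultimately show thesis using that by blast
qed

lemma canonical_word_in_lists: "canonical_word A d \<in> lists (Dgens n)"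
proof -
  have "idem i \<in> lists (Dgens n)" if "1 \<le> i" "i \<le> n" for i
    using that by (auto simp: idem_def Dgens_def)
  then have idems: "idems ks \<in> lists (Dgens n)" if "set ks \<subseteq> {1..n}" for ks
    using that by (induction ks) auto
  have "xpow_int d \<in> lists (Dgens n)"
    by (auto simp: xpow_int_def Dgens_def)
  moreover have "idems [1..<Suc n] \<in> lists (Dgens n)"
    by (rule idems) (simp only: set_upt_Suc order_refl)
  moreover have "idems (filter (\<lambda>i. i \<notin> A) [1..<Suc n]) \<in> lists (Dgens n)"
    by (rule idems) (simp only: set_filter_upt, blast)
  ultimately show ?thesis
    by (simp add: canonical_word_def zero_word_def normal_word_def del: upt_Suc)
qed

section \<open>Evaluation\<close>

lemma eval_simps [simp]:
  "eval [] = ptransl {1..n} 0"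
  "eval (a # w) = pcomp (gen_map n a) (eval w)"
  by (simp_all add: word_eval_def pid_eq_ptransl)

lemma eval_is_ptransl: "\<exists>A d. eval w = ptransl A d \<and> A \<subseteq> {1..n}"
proof (induction w)
  case (Cons a w)
  then obtain A d where "eval w = ptransl A d" by blast
  then show ?case
    by (cases a) (auto simp: pcomp_gen_map_ptransl)
qed auto

lemma eval_append: "eval (u @ v) = pcomp (eval u) (eval v)"
proof (induction u)
  case Nil
  obtain A d where "eval v = ptransl A d" "A \<subseteq> {1..n}"
    using eval_is_ptransl by blast
  then show ?case by (simp add: pcomp_ptransl_0 Int_absorb1)
qed (simp add: pcomp_assoc)

lemma eval_idem: "1 \<le> i \<Longrightarrow> i \<le> n \<Longrightarrow> eval (idem i) = ptransl ({1..n} - {i}) 0"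
  using n_ge_3 by (auto simp: idem_def pcomp_gen_map_ptransl intro!: ptransl_eqI)

lemma eval_idems: "set ks \<subseteq> {1..n} \<Longrightarrow> eval (idems ks) = ptransl ({1..n} - set ks) 0"
  by (induction ks) (auto simp: eval_append eval_idem pcomp_ptransl_0 intro!: ptransl_eqI)

lemma eval_replicate_X: "eval (replicate k X) = ptransl {i. 1 \<le> i \<and> i + k \<le> n} (int k)"
  by (induction k) (auto simp: pcomp_gen_map_ptransl intro!: ptransl_eqI)

lemma eval_replicate_Y: "eval (replicate k Y) = ptransl {i. k < i \<and> i \<le> n} (- int k)"
  by (induction k) (auto simp: pcomp_gen_map_ptransl intro!: ptransl_eqI)

lemma eval_xpow_int: "eval (xpow_int d) = ptransl (transl_dom d) d"
  by (auto simp: xpow_int_def transl_dom_def eval_replicate_X eval_replicate_Y intro!: ptransl_eqI)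

lemma eval_normal_word:
  "set ks \<subseteq> {1..n} \<Longrightarrow> eval (normal_word ks d) = ptransl (transl_dom d - set ks) d"
  by (auto simp: normal_word_def eval_append eval_idems eval_xpow_int pcomp_ptransl_0
      transl_dom_def intro!: ptransl_eqI)

lemma eval_Vrels: "(u, v) \<in> Vrels n \<Longrightarrow> eval u = eval v"
proof -
  have "eval (map E [2..<n]) = ptransl ({1..n} - {2..<n}) 0"
    using eval_idems[of "[2..<n]"] idems_eq_map_E[of "[2..<n]"] by force
  then have "eval ([Y, X] @ map E [2..<n] @ [X, Y]) = eval ([X] @ map E [2..<n] @ [X, Y])"
    by (auto simp: eval_append pcomp_gen_map_ptransl pcomp_ptransl_0 intro!: ptransl_eqI)
  then show "(u, v) \<in> Vrels n \<Longrightarrow> eval u = eval v"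
    unfolding Vrels_def by (auto simp: pcomp_gen_map_ptransl intro!: ptransl_eqI)
qed

lemma eval_eq_if_eqv: "u \<approx> v \<Longrightarrow> eval u = eval v"
  unfolding eqv_def by (rule gen_cong_imp_eq[where m = pcomp]) (use eval_append eval_Vrels in auto)

lemma eval_canonical_word:
  assumes "A \<subseteq> transl_dom d"
  shows "eval (canonical_word A d) = ptransl A d"
proof (cases "A = {}")
  case True
  have "eval zero_word = ptransl {} 0"
    using eval_idems[of "[1..<Suc n]"]
    by (simp add: zero_word_def atLeastLessThanSuc_atLeastAtMost del: upt_Suc)
  then show ?thesis
    using True by (simp add: canonical_word_def ptransl_def)
next
  case False
  define ks where "ks = filter (\<lambda>i. i \<notin> A) [1..<Suc n]"
  have set_ks: "set ks = {i \<in> {1..n}. i \<notin> A}"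
    unfolding ks_def by (rule set_filter_upt)
  have "eval (normal_word ks d) = ptransl (transl_dom d - set ks) d"
    by (rule eval_normal_word) (simp only: set_ks, blast)
  also have "transl_dom d - set ks = A"
    using set_ks assms transl_dom_subset[of d] by auto
  finally show ?thesis
    using False by (simp add: canonical_word_def ks_def)
qed

lemma eqv_if_eval_eq:
  assumes "u \<in> lists (Dgens n)" "v \<in> lists (Dgens n)" "eval u = eval v"
  shows "u \<approx> v"
proof -
  obtain A d where A: "A \<subseteq> transl_dom d" "u \<approx> canonical_word A d"
    using canonical_form[OF assms(1)] .
  obtain B e where B: "B \<subseteq> transl_dom e" "v \<approx> canonical_word B e"
    using canonical_form[OF assms(2)] .
  have "ptransl A d = ptransl B e"
    using eval_eq_if_eqv[OF A(2)] eval_eq_if_eqv[OF B(2)] assms(3) A(1) B(1)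
    by (simp add: eval_canonical_word)
  moreover have "0 \<le> int i + d" if "i \<in> A" for i
    using A(1) that by (auto simp: transl_dom_def)
  moreover have "0 \<le> int i + e" if "i \<in> B" for i
    using B(1) that by (auto simp: transl_dom_def)
  ultimately have "A = B" "A \<noteq> {} \<Longrightarrow> d = e"
    using ptransl_eq_iff by blast+
  then have "canonical_word A d = canonical_word B e"
    by (cases "A = {}") (simp_all add: canonical_word_def)
  then show ?thesis
    using A(2) B(2) by (metis eqv_sym eqv_trans)
qed

lemma eval_lists_eq_OCI: "eval ` lists (Dgens n) = OCI n"
proof
  show "eval ` lists (Dgens n) \<subseteq> OCI n"
  proof
    fix \<alpha> assume "\<alpha> \<in> eval ` lists (Dgens n)"
    then obtain w where "w \<in> lists (Dgens n)" "\<alpha> = eval w" by blast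
    then obtain A d where "A \<subseteq> transl_dom d" "w \<approx> canonical_word A d"
      using canonical_form by metis
    then have "\<alpha> = ptransl A d"
      using \<open>\<alpha> = eval w\<close> eval_eq_if_eqv eval_canonical_word by simp
    then show "\<alpha> \<in> OCI n"
      using \<open>A \<subseteq> transl_dom d\<close> n_ge_3 by (auto simp: transl_dom_def intro!: ptransl_in_OCI)
  qed
  show "OCI n \<subseteq> eval ` lists (Dgens n)"
  proof
    fix \<alpha> assume "\<alpha> \<in> OCI n"
    then obtain A d where A: "A \<subseteq> {1..n}" "\<And>i. i \<in> A \<Longrightarrow> 1 \<le> int i + d \<and> int i + d \<le> int n"
      and "\<alpha> = ptransl A d"
      by (rule OCI_imp_ptransl) blast
    moreover have "A \<subseteq> transl_dom d"
      using A by (auto simp: transl_dom_def)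
    ultimately show "\<alpha> \<in> eval ` lists (Dgens n)"
      using eval_canonical_word canonical_word_in_lists by (metis image_eqI)
  qed
qed

lemma gen_map_inj_on: "inj_on (gen_map n) (Dgens n)"
proof (rule inj_onI)
  fix a b assume a: "a \<in> Dgens n" and b: "b \<in> Dgens n" and eq: "gen_map n a = gen_map n b"
  \<comment> \<open>the value at 1 tells the three kinds of generators apart, the hole tells the \<open>e\<^sub>i\<close> apart\<close>
  have at_1: "gen_map n a 1 = gen_map n b 1" and at_hole: "gen_map n a i = gen_map n b i" for i
    using eq by simp_all
  show "a = b"
  proof (cases a)
    case (E i)
    then have i: "2 \<le> i" "i < n" using a by (auto simp: Dgens_def)
    then show ?thesis
      using at_1 at_hole[of i] b E n_ge_3
      by (cases b) (auto simp: gen_map_def Dgens_def split: if_splits)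
  qed (use at_1 b n_ge_3 in \<open>cases b; auto simp: gen_map_def Dgens_def split: if_splits\<close>)+
qed

lemma eval_single: "eval [a] = gen_map n a"
  by (cases a) (auto simp: pcomp_def gen_map_def ptransl_def fun_eq_iff)

lemma monoid_presentation:
  "monoid_presentation (Dgens n) (Vrels n) (gen_map n) pcomp (pid n) (OCI n)"
  unfolding monoid_presentation_def
proof (intro conjI ballI)
  show "gen_map n ` Dgens n \<subseteq> OCI n"
  proof (rule image_subsetI)
    fix a assume "a \<in> Dgens n"
    then have "[a] \<in> lists (Dgens n)" by simp
    then show "gen_map n a \<in> OCI n"
      using eval_lists_eq_OCI eval_single by (metis image_eqI)
  qed
  fix u v assume "u \<in> lists (Dgens n)" "v \<in> lists (Dgens n)"
  then show "eval u = eval v \<longleftrightarrow> (u, v) \<in> gen_cong (Dgens n) (Vrels n)"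
    using gen_cong_iff_eqv eval_eq_if_eqv eqv_if_eval_eq by blast
qed (simp_all add: Vrels_lists gen_map_inj_on eval_lists_eq_OCI)

end

section \<open>Counting generators and relations\<close>

lemma card_Dgens: "2 \<le> n \<Longrightarrow> card (Dgens n) = n"
proof -
  assume "2 \<le> n"
  have "card (E ` {2..n-1}) = n - 2"
    by (simp add: card_image inj_on_def)
  then have "card (Dgens n) = 2 + (n - 2)"
    unfolding Dgens_def by (subst card_Un_disjoint) auto
  then show ?thesis using \<open>2 \<le> n\<close> by simp
qed

lemma card_ordered_pairs: "2 * card {(i, j::nat). a \<le> i \<and> i < j \<and> j < a + m} = m * (m - 1)"
proof (induction m)
  case (Suc m)
  have split: "{(i, j::nat). a \<le> i \<and> i < j \<and> j < a + Suc m} =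
        {(i, j). a \<le> i \<and> i < j \<and> j < a + m} \<union> {a..<a + m} \<times> {a + m}"
    by auto
  have "finite {(i, j::nat). a \<le> i \<and> i < j \<and> j < a + m}"
    by (rule finite_subset[of _ "{a..<a + m} \<times> {a..<a + m}"]) auto
  then have "card {(i, j::nat). a \<le> i \<and> i < j \<and> j < a + Suc m} =
      card {(i, j::nat). a \<le> i \<and> i < j \<and> j < a + m} + m"
    unfolding split by (subst card_Un_disjoint) auto
  then show ?case using Suc by (cases m) (auto simp: algebra_simps)
qed (simp add: card_eq_0_iff)

lemma card_Vrels:
  assumes "3 \<le> n"
  shows "card (Vrels n) = (n\<^sup>2 + 3 * n) div 2"
proof -
  define P where "P = {(i, j::nat). 2 \<le> i \<and> i < j \<and> j < 2 + (n - 2)}"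
  define A1 where "A1 = (\<lambda>i. ([E i, E i], [E i])) ` {2..n-1}"
  define A2 where "A2 = {([X, Y, X], [X]), ([Y, X, Y], [Y])}"
  define A3 where "A3 = {([Y, X, X, Y], [X, Y, Y, X])}"
  define A4 where "A4 = (\<lambda>(i, j). ([E i, E j], [E j, E i])) ` P"
  define A5 where "A5 = (\<lambda>i. ([X, Y, E i], [E i, X, Y])) ` {2..n-1}"
  define A6 where "A6 = (\<lambda>i. ([Y, X, E i], [E i, Y, X])) ` {2..n-1}"
  define A7 where "A7 = (\<lambda>i. ([X, E (i + 1)], [E i, X])) ` {2..n-2}"
  define A8 where "A8 = {([X, X, Y], [E (n - 1), X]), ([Y, X, X], [X, E 2])}"
  define A9 where "A9 = {([Y, X] @ map E [2..<n] @ [X, Y], [X] @ map E [2..<n] @ [X, Y])}"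
  note A_defs = A1_def A2_def A3_def A4_def A5_def A6_def A7_def A8_def A9_def
  have "{([E i, E j], [E j, E i]) |i j. 2 \<le> i \<and> i < j \<and> j \<le> n - 1} = A4"
    using assms unfolding A4_def P_def by force
  moreover have
    "{([E i, E i], [E i]) |i. 2 \<le> i \<and> i \<le> n - 1} = A1"
    "{([X, Y, E i], [E i, X, Y]) |i. 2 \<le> i \<and> i \<le> n - 1} = A5"
    "{([Y, X, E i], [E i, Y, X]) |i. 2 \<le> i \<and> i \<le> n - 1} = A6"
    "{([X, E (i + 1)], [E i, X]) |i. 2 \<le> i \<and> i \<le> n - 2} = A7"
    unfolding A_defs by auto
  ultimately have V: "Vrels n = A1 \<union> A2 \<union> A3 \<union> A4 \<union> A5 \<union> A6 \<union> A7 \<union> A8 \<union> A9"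
    unfolding Vrels_def A2_def A3_def A8_def A9_def by simp
  have "finite P"
    unfolding P_def by (rule finite_subset[of _ "{0..<n} \<times> {0..<n}"]) auto
  then have "finite A1" "finite A2" "finite A3" "finite A4" "finite A5" "finite A6" "finite A7"
    "finite A8" "finite A9"
    unfolding A_defs by auto
  moreover have "A1 \<inter> A2 = {}" "(A1 \<union> A2) \<inter> A3 = {}" "(A1 \<union> A2 \<union> A3) \<inter> A4 = {}"
    "(A1 \<union> A2 \<union> A3 \<union> A4) \<inter> A5 = {}" "(A1 \<union> A2 \<union> A3 \<union> A4 \<union> A5) \<inter> A6 = {}"
    "(A1 \<union> A2 \<union> A3 \<union> A4 \<union> A5 \<union> A6) \<inter> A7 = {}"
    "(A1 \<union> A2 \<union> A3 \<union> A4 \<union> A5 \<union> A6 \<union> A7) \<inter> A8 = {}"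
    unfolding A_defs by auto
  moreover have "(A1 \<union> A2 \<union> A3 \<union> A4 \<union> A5 \<union> A6 \<union> A7 \<union> A8) \<inter> A9 = {}"
  proof -
    \<comment> \<open>the left-hand side of (V8) is the only one longer than four letters\<close>
    have "\<forall>r \<in> A1 \<union> A2 \<union> A3 \<union> A4 \<union> A5 \<union> A6 \<union> A7 \<union> A8. length (fst r) \<le> 4"
      unfolding A_defs by (simp add: case_prod_beta ball_Un)
    moreover have "4 < length ([Y, X] @ map E [2..<n] @ [X, Y])"
      using assms by simp
    ultimately have "([Y, X] @ map E [2..<n] @ [X, Y], [X] @ map E [2..<n] @ [X, Y])
        \<notin> A1 \<union> A2 \<union> A3 \<union> A4 \<union> A5 \<union> A6 \<union> A7 \<union> A8"
      by (metis fst_conv not_le)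
    then show ?thesis
      unfolding A9_def by blast
  qed
  ultimately have "card (Vrels n) =
      card A1 + card A2 + card A3 + card A4 + card A5 + card A6 + card A7 + card A8 + card A9"
    unfolding V by (simp add: card_Un_disjoint)
  also have "\<dots> = (n - 2) + 2 + 1 + card P + (n - 2) + (n - 2) + (n - 3) + 2 + 1"
  proof -
    have "card A4 = card P"
      unfolding A4_def by (rule card_image) (auto simp: inj_on_def)
    then show ?thesis
      using assms unfolding A1_def A2_def A3_def A5_def A6_def A7_def A8_def A9_def
      by (simp add: card_image inj_on_def)
  qed
  finally have "card (Vrels n) = 4 * n - 3 + card P"
    using assms by simp
  moreover obtain m where m: "n = m + 3"
    using assms by (metis add.commute le_iff_add)
  moreover have "2 * card P = (m + 1) * m"
    using card_ordered_pairs[of 2 "m + 1"] m by (simp add: P_def)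
  ultimately have "n\<^sup>2 + 3 * n = 2 * card (Vrels n)"
    by (simp add: power2_eq_square algebra_simps)
  then show ?thesis by simp
qed

theorem theorem2p17:
  fixes n :: nat
  assumes "n \<ge> 3"
  shows "monoid_presentation (Dgens n) (Vrels n) (gen_map n) pcomp (pid n) (OCI n)
         \<and> card (Dgens n) = n \<and> card (Vrels n) = (n\<^sup>2 + 3 * n) div 2"
proof -
  interpret OCI_presentation n
    using assms by unfold_locales
  show ?thesis
    using monoid_presentation card_Dgens card_Vrels assms by simp
qed

end
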